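(* Let $W$ be the complement of the right-handed Whitehead link with its standard ideal triangulation $\mathcal{T}_W$ by four ideal tetrahedra $\sigma_0,\dots,\sigma_3$, and let normal $Q$-coordinates be ordered as $(q_0,q_0',q_0'',q_1,q_1',q_1'',q_2,q_2',q_2'',q_3,q_3',q_3'')\in\mathbb{R}^{12}$. Define linear functionals $$\nu(\mathcal{M}_0)=q_1-q_1''+q_2'-q_2''-q_3+q_3',\qquad \nu(\mathcal{L}_0^t)=-2q_1'+2q_1''-2q_2'+2q_2'',$$ $$\nu(\mathcal{M}_1)=q_0-q_0'-q_1'+q_1''-q_3+q_3'',\qquad \nu(\mathcal{L}_1^t)=-2q_0'+2q_0''-2q_2'+2q_2'',$$ and for $N\in\mathbb{R}^{12}$ let $\beta(N)=(\nu(\mathcal{L}_0^t)(N),-\nu(\mathcal{M}_0)(N),\nu(\mathcal{L}_1^t)(N),-\nu(\mathcal{M}_1)(N))$. Let $V_1,V_2,V_3,V_4\in\mathbb{R}^{12}$ be the vectors whose only nonzero coordinates are equal to $1$ and are, respectively, $\{q_0,q_2\}$, $\{q_1,q_2\}$, $\{q_1,q_3\}$, $\{q_0,q_3\}$. Let $S,S'$ be embedded spun-normal surfaces in $W$ with respect to $\mathcal{T}_W$, with normal $Q$-coordinates $N(S),N(S')$. If $N(S)$ is not a nonnegative linear combination of $V_1,V_2,V_3,V_4$ and $\beta(N(S))=\beta(N(S'))$, then $N(S)=N(S')$; that is, $S$ is uniquely determined (up to normal isotopy and adding or removing vertex-linking components) by its transversely oriented boundary curves.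
   Context: $\mathcal{T}_W$ is the four-tetrahedron ideal triangulation of $W$ obtained by subdividing an ideal octahedron (triangulation m129:#2 of Regina's cusped census); $W$ has two cusps, cusp 0 and cusp 1, with meridians $\mathcal{M}_i$ and null-homologous longitudes $\mathcal{L}_i^t$. A (spun-)normal surface meets each ideal tetrahedron in normal triangles and quadrilaterals, possibly infinitely many triangles near the cusps. For each tetrahedron $\sigma_i$ the three quadrilateral types are $q_i,q_i',q_i''$, separating its vertices as $01/23$, $03/12$, $02/13$ respectively; $N(S)(q)$ counts quadrilaterals of type $q$ in $S$. The normal $Q$-coordinates of embedded spun-normal surfaces are exactly the integer vectors $N\ge 0$ that are admissible (in each tetrahedron at most one of the three quadrilateral coordinates is nonzero) and satisfy the $Q$-matching equations, which for $\mathcal{T}_W$ are equivalent to $$0=q_0'-q_0''+q_1'-q_1''+q_2'-q_2''+q_3'-q_3'',\qquad 0=q_0-q_0'+q_1-q_1'-q_2+q_2'-q_3+q_3';$$ and $N(S)$ determines $S$ up to normal isotopy and adding or removing vertex-linking surfaces (normal surfaces made of triangles only). The vector $\beta(N(S))$ records the signed intersection numbers of $S$ with the peripheral curves, i.e.\ the transversely oriented boundary curves of $S$. The nonnegative combinations of $V_1,\dots,V_4$ projectivise to the "centre square" of the projective admissible solution space. *)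

theory Defs
  imports Main "HOL-Analysis.Analysis"
begin

text \<open>Normal Q-coordinates for the triangulation T_W are vectors in R^12 indexed
by (tetrahedron i, quad type k) with i < 4, k < 3; k = 0,1,2 stand for q_i, q_i', q_i''.\<close>

type_synonym qvec = "real list"

definition qc :: "qvec \<Rightarrow> nat \<Rightarrow> nat \<Rightarrow> real" where
  "qc N i k = N ! (3 * i + k)"

definition nu_M0 :: "qvec \<Rightarrow> real" where
  "nu_M0 N = qc N 1 0 - qc N 1 2 + qc N 2 1 - qc N 2 2 - qc N 3 0 + qc N 3 1"

definition nu_L0 :: "qvec \<Rightarrow> real" where
  "nu_L0 N = - 2 * qc N 1 1 + 2 * qc N 1 2 - 2 * qc N 2 1 + 2 * qc N 2 2"

definition nu_M1 :: "qvec \<Rightarrow> real" where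
  "nu_M1 N = qc N 0 0 - qc N 0 1 - qc N 1 1 + qc N 1 2 - qc N 3 0 + qc N 3 2"

definition nu_L1 :: "qvec \<Rightarrow> real" where
  "nu_L1 N = - 2 * qc N 0 1 + 2 * qc N 0 2 - 2 * qc N 2 1 + 2 * qc N 2 2"

definition beta :: "qvec \<Rightarrow> real \<times> real \<times> real \<times> real" where
  "beta N = (nu_L0 N, - nu_M0 N, nu_L1 N, - nu_M1 N)"

definition unitq :: "nat \<Rightarrow> nat \<Rightarrow> qvec" where
  "unitq a b = map (\<lambda>p. if p = 3 * a \<or> p = 3 * b then 1 else 0) [0..<12]"

definition V1 :: qvec where "V1 = unitq 0 2"
definition V2 :: qvec where "V2 = unitq 1 2"
definition V3 :: qvec where "V3 = unitq 1 3"
definition V4 :: qvec where "V4 = unitq 0 3"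

definition nonneg_comb_V :: "qvec \<Rightarrow> bool" where
  "nonneg_comb_V N \<longleftrightarrow> (\<exists>a b c d :: real. a \<ge> 0 \<and> b \<ge> 0 \<and> c \<ge> 0 \<and> d \<ge> 0 \<and>
     N = map (\<lambda>p. a * V1 ! p + b * V2 ! p + c * V3 ! p + d * V4 ! p) [0..<12])"

definition admissible :: "qvec \<Rightarrow> bool" where
  "admissible N \<longleftrightarrow> (\<forall>i<4. \<forall>k<3. \<forall>l<3. k \<noteq> l \<longrightarrow> qc N i k = 0 \<or> qc N i l = 0)"

definition Q_matching :: "qvec \<Rightarrow> bool" where
  "Q_matching N \<longleftrightarrow>
     0 = qc N 0 1 - qc N 0 2 + qc N 1 1 - qc N 1 2 + qc N 2 1 - qc N 2 2 + qc N 3 1 - qc N 3 2 \<and>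
     0 = qc N 0 0 - qc N 0 1 + qc N 1 0 - qc N 1 1 - qc N 2 0 + qc N 2 1 - qc N 3 0 + qc N 3 1"

text \<open>Normal Q-coordinates of embedded spun-normal surfaces in W w.r.t. T_W:
exactly the nonnegative integer admissible solutions of the Q-matching equations.\<close>
definition spun_normal_Q :: "qvec \<Rightarrow> bool" where
  "spun_normal_Q N \<longleftrightarrow> length N = 12 \<and> (\<forall>x\<in>set N. x \<in> \<int> \<and> x \<ge> 0) \<and>
     admissible N \<and> Q_matching N"

end

theory Submission
  imports Defs
begin

text \<open>Write \<open>d\<^sub>i = q\<^sub>i' - q\<^sub>i''\<close>. For an admissible nonnegative \<open>N\<close> this gives
\<open>q\<^sub>i' = max d\<^sub>i 0\<close>, \<open>q\<^sub>i'' = max (-d\<^sub>i) 0\<close>, and \<open>q\<^sub>i = 0\<close> unless \<open>d\<^sub>i = 0\<close>.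
The longitudes determine \<open>u = d\<^sub>1 + d\<^sub>2\<close> and \<open>v = d\<^sub>0 + d\<^sub>2\<close>, and the first matching
equation says that the \<open>d\<^sub>i\<close> sum to zero, so all \<open>d\<^sub>i\<close> are affine in the single
parameter \<open>t = d\<^sub>2\<close>. The meridians and the second matching equation then express
\<open>q\<^sub>i - q\<^sub>3\<close> as piecewise-linear functions of \<open>t\<close> with breakpoints \<open>0, u, v, u + v\<close>,
and a check of the finitely many linear pieces shows that at most one \<open>t\<close> is
compatible with admissibility. Once the \<open>d\<^sub>i\<close> are known, the \<open>q\<^sub>i\<close> are fixed up to a common additive
constant, which in turn is fixed by any tetrahedron with \<open>d\<^sub>i \<noteq> 0\<close>; such a tetrahedron exists exactly
when \<open>N\<close> lies off the centre square.\<close>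

definition qdiff :: "qvec \<Rightarrow> nat \<Rightarrow> real" where
  "qdiff N i = qc N i 1 - qc N i 2"

lemma qvec_eqI:
  assumes "length N = 12" "length N' = 12"
    and "\<And>i k. i < 4 \<Longrightarrow> k < 3 \<Longrightarrow> qc N i k = qc N' i k"
  shows "N = N'"
proof (rule nth_equalityI)
  fix p assume "p < length N"
  then have "p div 3 < 4" "p mod 3 < 3" "p = 3 * (p div 3) + p mod 3"
    using assms(1) by auto
  then show "N ! p = N' ! p"
    using assms(3)[of "p div 3" "p mod 3"] unfolding qc_def by metis
qed (use assms in simp)

lemma spun_normal_Q_nonneg:
  assumes "spun_normal_Q N" "i < 4" "k < 3"
  shows "qc N i k \<ge> 0"
proof -
  have "3 * i + k < length N"
    using assms unfolding spun_normal_Q_def by simp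
  then show ?thesis
    using assms(1) unfolding spun_normal_Q_def qc_def by (meson nth_mem)
qed

lemma spun_normal_Q_quads:
  assumes "spun_normal_Q N" "i < 4"
  shows "qc N i 1 = max (qdiff N i) 0" "qc N i 2 = max (- qdiff N i) 0"
    and "qc N i 0 = 0 \<or> qdiff N i = 0"
proof -
  have adm: "qc N i k = 0 \<or> qc N i l = 0" if "k < 3" "l < 3" "k \<noteq> l" for k l
    using assms that unfolding spun_normal_Q_def admissible_def by blast
  have "qc N i 0 \<ge> 0" "qc N i 1 \<ge> 0" "qc N i 2 \<ge> 0"
    using spun_normal_Q_nonneg[OF assms] by auto
  with adm[of 0 1] adm[of 0 2] adm[of 1 2]
  show "qc N i 1 = max (qdiff N i) 0" "qc N i 2 = max (- qdiff N i) 0"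
    and "qc N i 0 = 0 \<or> qdiff N i = 0"
    unfolding qdiff_def by auto
qed

lemma nu_L0_qdiff: "nu_L0 N = - 2 * (qdiff N 1 + qdiff N 2)"
  unfolding nu_L0_def qdiff_def by simp

lemma nu_L1_qdiff: "nu_L1 N = - 2 * (qdiff N 0 + qdiff N 2)"
  unfolding nu_L1_def qdiff_def by simp

lemma Q_matching_qdiff_sum:
  "Q_matching N \<Longrightarrow> qdiff N 0 + qdiff N 1 + qdiff N 2 + qdiff N 3 = 0"
  unfolding Q_matching_def qdiff_def by linarith

lemma quad_offsets_meridians:
  "qc N 0 0 - qc N 3 0 = nu_M1 N + qc N 0 1 + qc N 1 1 - qc N 1 2 - qc N 3 2"
  "qc N 1 0 - qc N 3 0 = nu_M0 N - qdiff N 2 + qc N 1 2 - qc N 3 1"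
  "Q_matching N \<Longrightarrow> qc N 2 0 - qc N 3 0 = nu_M0 N + nu_M1 N + qc N 2 2 - qc N 3 2"
  unfolding nu_M0_def nu_M1_def qdiff_def Q_matching_def by (linarith | (elim conjE, linarith))+

text \<open>Here \<open>t\<close> plays \<open>d\<^sub>2\<close>, \<open>u\<close> and \<open>v\<close> play \<open>d\<^sub>1 + d\<^sub>2\<close> and \<open>d\<^sub>0 + d\<^sub>2\<close>, \<open>m\<^sub>0\<close> and \<open>m\<^sub>1\<close>
the meridians, and \<open>a i\<close> the quad \<open>q\<^sub>i\<close>; the breakpoints \<open>v, u, 0, u + v\<close> are where
\<open>d\<^sub>0, d\<^sub>1, d\<^sub>2, d\<^sub>3\<close> vanish.\<close>

definition feasible_parameter ::
    "real \<Rightarrow> real \<Rightarrow> real \<Rightarrow> real \<Rightarrow> real \<Rightarrow> (nat \<Rightarrow> real) \<Rightarrow> bool" where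
  "feasible_parameter u v m0 m1 t a \<longleftrightarrow>
     a 0 \<ge> 0 \<and> a 1 \<ge> 0 \<and> a 2 \<ge> 0 \<and> a 3 \<ge> 0 \<and>
     (a 0 = 0 \<or> t = v) \<and> (a 1 = 0 \<or> t = u) \<and> (a 2 = 0 \<or> t = 0) \<and> (a 3 = 0 \<or> t = u + v) \<and>
     a 0 - a 3 = m1 + max (v - t) 0 + (u - t) - max (u + v - t) 0 \<and>
     a 1 - a 3 = m0 - t + max (t - u) 0 - max (t - u - v) 0 \<and>
     a 2 - a 3 = m0 + m1 + max (- t) 0 - max (u + v - t) 0"

lemma feasible_parameter_unique:
  "feasible_parameter u v m0 m1 t a \<Longrightarrow> feasible_parameter u v m0 m1 t' b \<Longrightarrow> t = t'"
  unfolding feasible_parameter_def by (smt (verit))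

lemma spun_normal_Q_feasible_parameter:
  assumes "spun_normal_Q N"
  shows "feasible_parameter (qdiff N 1 + qdiff N 2) (qdiff N 0 + qdiff N 2) (nu_M0 N) (nu_M1 N)
           (qdiff N 2) (\<lambda>i. qc N i 0)"
proof -
  have matching: "Q_matching N"
    using assms unfolding spun_normal_Q_def by simp
  have q: "qc N i 1 = max (qdiff N i) 0" "qc N i 2 = max (- qdiff N i) 0"
    "qc N i 0 = 0 \<or> qdiff N i = 0" "qc N i 0 \<ge> 0" if "i < 4" for i
    using spun_normal_Q_quads[OF assms that] spun_normal_Q_nonneg[OF assms that] by auto
  have "qdiff N 3 = - qdiff N 0 - qdiff N 1 - qdiff N 2"
    using Q_matching_qdiff_sum[OF matching] by linarith
  then show ?thesis
    using quad_offsets_meridians[of N] matching q[of 0] q[of 1] q[of 2] q[of 3]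
    unfolding feasible_parameter_def by (auto simp: max_def)
qed

lemma qdiff_determined_by_beta:
  assumes "spun_normal_Q N" "spun_normal_Q N'" "beta N = beta N'" "i < 4"
  shows "qdiff N i = qdiff N' i"
proof -
  have nu: "nu_L0 N = nu_L0 N'" "nu_L1 N = nu_L1 N'" "nu_M0 N = nu_M0 N'" "nu_M1 N = nu_M1 N'"
    using assms(3) unfolding beta_def by auto
  then have uv: "qdiff N 1 + qdiff N 2 = qdiff N' 1 + qdiff N' 2"
    "qdiff N 0 + qdiff N 2 = qdiff N' 0 + qdiff N' 2"
    unfolding nu_L0_qdiff nu_L1_qdiff by simp_all
  have "qdiff N 2 = qdiff N' 2"
    using spun_normal_Q_feasible_parameter[OF assms(1), unfolded uv nu(3,4)]
      spun_normal_Q_feasible_parameter[OF assms(2)] by (rule feasible_parameter_unique)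
  then show ?thesis
    using uv Q_matching_qdiff_sum[of N] Q_matching_qdiff_sum[of N'] assms(1,2,4)
    unfolding spun_normal_Q_def by (auto simp: numeral_eq_Suc less_Suc_eq)
qed

lemma spun_normal_Q_eq_if_qdiff_eq:
  assumes "spun_normal_Q N" "spun_normal_Q N'" "beta N = beta N'"
    and d: "\<And>i. i < 4 \<Longrightarrow> qdiff N i = qdiff N' i"
    and "j < 4" "qdiff N j \<noteq> 0"
  shows "N = N'"
proof -
  have nu: "nu_M0 N = nu_M0 N'" "nu_M1 N = nu_M1 N'"
    using assms(3) unfolding beta_def by auto
  have quads: "qc N i 1 = qc N' i 1" "qc N i 2 = qc N' i 2" if "i < 4" for i
    using spun_normal_Q_quads[OF assms(1) that] spun_normal_Q_quads[OF assms(2) that] d[OF that]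
    by simp_all
  have matching: "Q_matching N" "Q_matching N'"
    using assms(1,2) unfolding spun_normal_Q_def by simp_all
  have offsets: "qc N i 0 - qc N 3 0 = qc N' i 0 - qc N' 3 0" if "i < 4" for i
  proof -
    have "i = 0 \<or> i = 1 \<or> i = 2 \<or> i = 3"
      using that by auto
    then show ?thesis
      using quad_offsets_meridians[of N] quad_offsets_meridians[of N'] matching nu d[of 2]
        quads[of 0] quads[of 1] quads[of 2] quads[of 3] by auto
  qed
  have "qc N j 0 = 0" "qc N' j 0 = 0"
    using spun_normal_Q_quads(3)[OF assms(1) \<open>j < 4\<close>] spun_normal_Q_quads(3)[OF assms(2) \<open>j < 4\<close>]
      assms(6) d[OF \<open>j < 4\<close>] by auto
  then have "qc N i 0 = qc N' i 0" if "i < 4" for i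
    using offsets[OF that] offsets[OF \<open>j < 4\<close>] by linarith
  then show ?thesis
    using assms(1,2) quads unfolding spun_normal_Q_def
    by (intro qvec_eqI) (auto simp: numeral_eq_Suc less_Suc_eq)
qed

lemma qc_map: "3 * i + k < 12 \<Longrightarrow> qc (map f [0..<12]) i k = f (3 * i + k)"
  unfolding qc_def by simp

lemma unitq_nth: "p < 12 \<Longrightarrow> unitq a b ! p = (if p = 3 * a \<or> p = 3 * b then 1 else 0)"
  unfolding unitq_def by simp

lemma nonneg_comb_V_if_qdiff_zero:
  assumes "spun_normal_Q N" and zero: "\<And>i. i < 4 \<Longrightarrow> qdiff N i = 0"
  shows "nonneg_comb_V N"
proof -
  let ?q = "\<lambda>i. qc N i 0"
  have bc: "qc N i 1 = 0" "qc N i 2 = 0" if "i < 4" for i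
    using spun_normal_Q_quads[OF assms(1) that] zero[OF that] by simp_all
  have balance: "?q 0 + ?q 1 = ?q 2 + ?q 3"
    using assms(1) bc[of 0] bc[of 1] bc[of 2] bc[of 3]
    unfolding spun_normal_Q_def Q_matching_def by simp
  have nonneg: "?q i \<ge> 0" if "i < 4" for i
    using spun_normal_Q_nonneg[OF assms(1) that] by simp
  define a where "a = min (?q 0) (?q 2)"
  define c where "c = min (?q 1) (?q 3)"
  have coeffs: "a \<ge> 0" "?q 2 - a \<ge> 0" "c \<ge> 0" "?q 0 - a \<ge> 0"
    using nonneg[of 0] nonneg[of 1] nonneg[of 2] nonneg[of 3] unfolding a_def c_def by auto
  have decomp: "?q 1 = (?q 2 - a) + c" "?q 3 = c + (?q 0 - a)"
    using balance unfolding a_def c_def by (auto simp: min_def)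
  have "N = map (\<lambda>p. a * V1 ! p + (?q 2 - a) * V2 ! p + c * V3 ! p + (?q 0 - a) * V4 ! p)
      [0..<12]" (is "N = ?comb")
  proof (intro qvec_eqI)
    show "length N = 12" "length ?comb = 12"
      using assms(1) unfolding spun_normal_Q_def by simp_all
    fix i k :: nat assume "i < 4" "k < 3"
    then have "i \<in> {0, 1, 2, 3}" "k \<in> {0, 1, 2}" by auto
    then show "qc N i k = qc ?comb i k"
      using bc[of 0] bc[of 1] bc[of 2] bc[of 3] decomp
      by (auto simp: qc_map V1_def V2_def V3_def V4_def unitq_nth)
  qed
  with coeffs show ?thesis
    unfolding nonneg_comb_V_def by blast
qed

theorem mainTheorem5:
  fixes N N' :: qvec
  assumes "spun_normal_Q N" and "spun_normal_Q N'"
    and "\<not> nonneg_comb_V N"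
    and "beta N = beta N'"
  shows "N = N'"
proof -
  obtain j where "j < 4" "qdiff N j \<noteq> 0"
    using nonneg_comb_V_if_qdiff_zero assms(1,3) by blast
  then show ?thesis
    using spun_normal_Q_eq_if_qdiff_eq qdiff_determined_by_beta assms(1,2,4) by blast
qed

end
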